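(* Let $\mathcal D[t]\subset\mathcal H\subset\mathcal D^\times[t^\times]$ be a rigged Hilbert space with $\mathcal D[t]$ a reflexive Fréchet space, $(X,\mu)$ a $\sigma$-finite measure space, $\omega,\theta$ Bessel distribution maps and $m\in L^\infty(X,\mu)$. Suppose the outer multiplier $\mathcal M_{m,\omega,\theta}:\mathcal D\to\mathcal D^\times$ is bijective with continuous inverse $\mathcal D^\times[t^\times]\to\mathcal D[t]$. Then (i) $M_{m,\omega,\theta}:D(M_{m,\omega,\theta})\to\mathcal H$ is bijective, densely defined in $\mathcal H$, and has a bounded inverse (in particular it is closed); (ii) $(M_{m,\omega,\theta})^*=M_{\overline m,\theta,\omega}$.
   Context: Rigged Hilbert space: $\mathcal D$ dense subspace of Hilbert space $\mathcal H$ with a locally convex topology $t$ finer than the norm topology, $\mathcal D^\times$ its conjugate dual with strong dual topology, $\mathcal H\subset\mathcal D^\times$ (continuous dense inclusions), pairing $\langle F,f\rangle$ extending the inner product, $\langle f,F\rangle:=\overline{\langle F,f\rangle}$. $\omega:X\to\mathcal D^\times$ is a Bessel distribution map if $x\mapsto\langle f,\omega_x\rangle$ is measurable and $\int_X|\langle f,\omega_x\rangle|^2d\mu<\infty$ for all $f\in\mathcal D$. Outer distribution multiplier: $\mathcal M_{m,\omega,\theta}$ is the continuous linear map $\mathcal D\to\mathcal D^\times$ with $\langle\mathcal M_{m,\omega,\theta}f,g\rangle=\int_X m(x)\langle f,\omega_x\rangle\langle\theta_x,g\rangle d\mu$ for $f,g\in\mathcal D$. Distribution multiplier $M_{m,\omega,\theta}$: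 domain is the set of $f\in\mathcal D$ for which $g\mapsto\int_X m(x)\langle f,\omega_x\rangle\langle\theta_x,g\rangle d\mu$ ($g\in\mathcal D$) is defined and bounded in the $\mathcal H$-norm, and $M_{m,\omega,\theta}f\in\mathcal H$ is its Riesz representative (equivalently, $D(M_{m,\omega,\theta})=\{f\in\mathcal D:\mathcal M_{m,\omega,\theta}f\in\mathcal H\}$ and $M_{m,\omega,\theta}$ is the restriction of $\mathcal M_{m,\omega,\theta}$). *)

theory Defs
  imports "HOL-Analysis.Analysis"
begin

section \<open>Complex Hilbert spaces (the library only has real inner product spaces)\<close>

class chilbert = ab_group_add +
  fixes cscale :: "complex \<Rightarrow> 'a \<Rightarrow> 'a"
    and cinner :: "'a \<Rightarrow> 'a \<Rightarrow> complex"
  assumes cscale_add_right: "cscale a (x + y) = cscale a x + cscale a y"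
    and cscale_add_left: "cscale (a + b) x = cscale a x + cscale b x"
    and cscale_cscale: "cscale a (cscale b x) = cscale (a * b) x"
    and cscale_one: "cscale 1 x = x"
    and cinner_add_left: "cinner (x + y) z = cinner x z + cinner y z"
    and cinner_scale_left: "cinner (cscale a x) y = a * cinner x y"
    and cinner_commute: "cinner y x = cnj (cinner x y)"
    and cinner_nonneg: "0 \<le> Re (cinner x x)"
    and cinner_eq_zero: "cinner x x = 0 \<longleftrightarrow> x = 0"
    and chilbert_complete:
      "(\<forall>e>0. \<exists>N. \<forall>m n. N \<le> m \<and> N \<le> n \<longrightarrow>
            sqrt (Re (cinner (X m - X n) (X m - X n))) < e)
       \<Longrightarrow> \<exists>L. (\<lambda>n. sqrt (Re (cinner (X n - L) (X n - L)))) \<longlonglongrightarrow> 0"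

definition cnorm :: "'a::chilbert \<Rightarrow> real" where
  "cnorm x = sqrt (Re (cinner x x))"

definition cnorm_top :: "'a::chilbert topology" where
  "cnorm_top = topology (\<lambda>U. \<forall>x\<in>U. \<exists>e>0. \<forall>y. cnorm (y - x) < e \<longrightarrow> y \<in> U)"

section \<open>Locally convex spaces, generic in the vector operations\<close>

definition lin_subspace :: "('a \<Rightarrow> 'a \<Rightarrow> 'a) \<Rightarrow> (complex \<Rightarrow> 'a \<Rightarrow> 'a) \<Rightarrow> 'a \<Rightarrow> 'a set \<Rightarrow> bool" where
  "lin_subspace add scal z S \<longleftrightarrow> z \<in> S \<and> (\<forall>x\<in>S. \<forall>y\<in>S. add x y \<in> S) \<and> (\<forall>c. \<forall>x\<in>S. scal c x \<in> S)"

definition lctvs :: "('a \<Rightarrow> 'a \<Rightarrow> 'a) \<Rightarrow> (complex \<Rightarrow> 'a \<Rightarrow> 'a) \<Rightarrow> 'a \<Rightarrow> 'a topology \<Rightarrow> bool" where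
  "lctvs add scal z T \<longleftrightarrow>
     lin_subspace add scal z (topspace T) \<and> Hausdorff_space T \<and>
     continuous_map (prod_topology T T) T (\<lambda>p. add (fst p) (snd p)) \<and>
     continuous_map (prod_topology (euclidean :: complex topology) T) T (\<lambda>p. scal (fst p) (snd p)) \<and>
     (\<forall>U. openin T U \<and> z \<in> U \<longrightarrow>
        (\<exists>V. openin T V \<and> z \<in> V \<and> V \<subseteq> U \<and>
           (\<forall>x\<in>V. \<forall>y\<in>V. \<forall>a::real. 0 \<le> a \<and> a \<le> 1 \<longrightarrow>
               add (scal (complex_of_real a) x) (scal (complex_of_real (1 - a)) y) \<in> V)))"

definition tvs_complete :: "('a \<Rightarrow> 'a \<Rightarrow> 'a) \<Rightarrow> (complex \<Rightarrow> 'a \<Rightarrow> 'a) \<Rightarrow> 'a \<Rightarrow> 'a topology \<Rightarrow> bool" where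
  "tvs_complete add scal z T \<longleftrightarrow>
     (\<forall>X. (\<forall>n. X n \<in> topspace T) \<and>
          (\<forall>U. openin T U \<and> z \<in> U \<longrightarrow>
             (\<exists>N. \<forall>m n. N \<le> m \<and> N \<le> n \<longrightarrow> add (X m) (scal (-1) (X n)) \<in> U))
        \<longrightarrow> (\<exists>L\<in>topspace T. limitin T X L sequentially))"

definition frechet :: "('a \<Rightarrow> 'a \<Rightarrow> 'a) \<Rightarrow> (complex \<Rightarrow> 'a \<Rightarrow> 'a) \<Rightarrow> 'a \<Rightarrow> 'a topology \<Rightarrow> bool" where
  "frechet add scal z T \<longleftrightarrow> lctvs add scal z T \<and> metrizable_space T \<and> tvs_complete add scal z T"

definition tvs_bounded :: "('a \<Rightarrow> 'a \<Rightarrow> 'a) \<Rightarrow> (complex \<Rightarrow> 'a \<Rightarrow> 'a) \<Rightarrow> 'a \<Rightarrow> 'a topology \<Rightarrow> 'a set \<Rightarrow> bool" where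
  "tvs_bounded add scal z T B \<longleftrightarrow> B \<subseteq> topspace T \<and>
     (\<forall>U. openin T U \<and> z \<in> U \<longrightarrow> (\<exists>r>0. \<forall>c. cmod c \<le> r \<longrightarrow> (\<forall>x\<in>B. scal c x \<in> U)))"

text \<open>Conjugate dual: continuous conjugate-linear functionals (extended by 0 off the space).
  For \<open>F\<close> in the dual, \<open>F f\<close> is the pairing \<open>\<langle>F,f\<rangle>\<close>.\<close>
definition conj_dual :: "('a \<Rightarrow> 'a \<Rightarrow> 'a) \<Rightarrow> (complex \<Rightarrow> 'a \<Rightarrow> 'a) \<Rightarrow> 'a \<Rightarrow> 'a topology \<Rightarrow> ('a \<Rightarrow> complex) set" where
  "conj_dual add scal z T = {F.
     (\<forall>x\<in>topspace T. \<forall>y\<in>topspace T. F (add x y) = F x + F y) \<and>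
     (\<forall>c. \<forall>x\<in>topspace T. F (scal c x) = cnj c * F x) \<and>
     continuous_map T (euclidean :: complex topology) F \<and>
     (\<forall>x. x \<notin> topspace T \<longrightarrow> F x = 0)}"

definition strong_top :: "('a \<Rightarrow> 'a \<Rightarrow> 'a) \<Rightarrow> (complex \<Rightarrow> 'a \<Rightarrow> 'a) \<Rightarrow> 'a \<Rightarrow> 'a topology \<Rightarrow> ('a \<Rightarrow> complex) topology" where
  "strong_top add scal z T = topology (\<lambda>U. U \<subseteq> conj_dual add scal z T \<and>
     (\<forall>F\<in>U. \<exists>B e. tvs_bounded add scal z T B \<and> e > 0 \<and>
        {G \<in> conj_dual add scal z T. \<forall>f\<in>B. cmod (G f - F f) < e} \<subseteq> U))"

definition fadd :: "('a \<Rightarrow> complex) \<Rightarrow> ('a \<Rightarrow> complex) \<Rightarrow> 'a \<Rightarrow> complex" where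
  "fadd F G = (\<lambda>x. F x + G x)"
definition fscal :: "complex \<Rightarrow> ('a \<Rightarrow> complex) \<Rightarrow> 'a \<Rightarrow> complex" where
  "fscal c F = (\<lambda>x. c * F x)"
definition fzero :: "'a \<Rightarrow> complex" where
  "fzero = (\<lambda>x. 0)"

definition reflexive_space :: "('a \<Rightarrow> 'a \<Rightarrow> 'a) \<Rightarrow> (complex \<Rightarrow> 'a \<Rightarrow> 'a) \<Rightarrow> 'a \<Rightarrow> 'a topology \<Rightarrow> bool" where
  "reflexive_space add scal z T \<longleftrightarrow>
     (let Dx = conj_dual add scal z T; Tx = strong_top add scal z T;
          J = (\<lambda>f F. if F \<in> Dx then cnj (F f) else 0)
      in bij_betw J (topspace T) (conj_dual fadd fscal fzero Tx) \<and>
         homeomorphic_map T (strong_top fadd fscal fzero Tx) J)"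

abbreviation Dcross :: "'h::chilbert topology \<Rightarrow> ('h \<Rightarrow> complex) set" where
  "Dcross t \<equiv> conj_dual (+) cscale 0 t"
abbreviation Dcross_top :: "'h::chilbert topology \<Rightarrow> ('h \<Rightarrow> complex) topology" where
  "Dcross_top t \<equiv> strong_top (+) cscale 0 t"

definition hemb :: "'h::chilbert set \<Rightarrow> 'h \<Rightarrow> 'h \<Rightarrow> complex" where
  "hemb D h = (\<lambda>g. if g \<in> D then cinner h g else 0)"

definition rigged_hilbert :: "'h::chilbert set \<Rightarrow> 'h topology \<Rightarrow> bool" where
  "rigged_hilbert D t \<longleftrightarrow>
     topspace t = D \<and> lctvs (+) cscale 0 t \<and>
     (\<forall>U. openin cnorm_top U \<longrightarrow> openin t (U \<inter> D)) \<and>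
     cnorm_top closure_of D = UNIV \<and>
     (\<forall>h. hemb D h \<in> Dcross t) \<and>
     continuous_map cnorm_top (Dcross_top t) (hemb D) \<and>
     (Dcross_top t) closure_of (range (hemb D)) = Dcross t"

text \<open>Bessel distribution map; \<open>\<langle>f,\<omega>\<^sub>x\<rangle> = cnj (\<omega> x f)\<close>.\<close>
definition bessel_map :: "'x measure \<Rightarrow> 'h::chilbert topology \<Rightarrow> ('x \<Rightarrow> 'h \<Rightarrow> complex) \<Rightarrow> bool" where
  "bessel_map \<mu> t \<omega> \<longleftrightarrow>
     (\<forall>x\<in>space \<mu>. \<omega> x \<in> Dcross t) \<and>
     (\<forall>f\<in>topspace t. (\<lambda>x. cnj (\<omega> x f)) \<in> borel_measurable \<mu> \<and>
        (\<integral>\<^sup>+x. ennreal ((cmod (\<omega> x f))\<^sup>2) \<partial>\<mu>) < \<infinity>)"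

text \<open>Outer distribution multiplier \<open>\<langle>\<M> f, g\<rangle> = \<integral> m(x) \<langle>f,\<omega>\<^sub>x\<rangle> \<langle>\<theta>\<^sub>x,g\<rangle> d\<mu>\<close>.\<close>
definition outer_mult :: "'x measure \<Rightarrow> 'h::chilbert set \<Rightarrow> ('x \<Rightarrow> complex) \<Rightarrow>
    ('x \<Rightarrow> 'h \<Rightarrow> complex) \<Rightarrow> ('x \<Rightarrow> 'h \<Rightarrow> complex) \<Rightarrow> 'h \<Rightarrow> 'h \<Rightarrow> complex" where
  "outer_mult \<mu> D m \<omega> \<theta> f = (\<lambda>g. if g \<in> D then (\<integral>x. m x * cnj (\<omega> x f) * \<theta> x g \<partial>\<mu>) else 0)"

definition dmult_dom :: "'x measure \<Rightarrow> 'h::chilbert set \<Rightarrow> ('x \<Rightarrow> complex) \<Rightarrow>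
    ('x \<Rightarrow> 'h \<Rightarrow> complex) \<Rightarrow> ('x \<Rightarrow> 'h \<Rightarrow> complex) \<Rightarrow> 'h set" where
  "dmult_dom \<mu> D m \<omega> \<theta> = {f \<in> D. \<exists>h. \<forall>g\<in>D. outer_mult \<mu> D m \<omega> \<theta> f g = cinner h g}"

definition dmult :: "'x measure \<Rightarrow> 'h::chilbert set \<Rightarrow> ('x \<Rightarrow> complex) \<Rightarrow>
    ('x \<Rightarrow> 'h \<Rightarrow> complex) \<Rightarrow> ('x \<Rightarrow> 'h \<Rightarrow> complex) \<Rightarrow> 'h \<Rightarrow> 'h" where
  "dmult \<mu> D m \<omega> \<theta> f = (THE h. \<forall>g\<in>D. outer_mult \<mu> D m \<omega> \<theta> f g = cinner h g)"

section \<open>Unbounded operators on the Hilbert space (given by a domain and a map)\<close>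

definition closed_op :: "'h::chilbert set \<Rightarrow> ('h \<Rightarrow> 'h) \<Rightarrow> bool" where
  "closed_op S T \<longleftrightarrow> (\<forall>X f h. (\<forall>n. X n \<in> S) \<and> limitin cnorm_top X f sequentially \<and>
      limitin cnorm_top (\<lambda>n. T (X n)) h sequentially \<longrightarrow> f \<in> S \<and> T f = h)"

definition adj_dom :: "'h::chilbert set \<Rightarrow> ('h \<Rightarrow> 'h) \<Rightarrow> 'h set" where
  "adj_dom S T = {g. \<exists>h. \<forall>f\<in>S. cinner (T f) g = cinner f h}"

definition adj :: "'h::chilbert set \<Rightarrow> ('h \<Rightarrow> 'h) \<Rightarrow> 'h \<Rightarrow> 'h" where
  "adj S T g = (THE h. \<forall>f\<in>S. cinner (T f) g = cinner f h)"

end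

theory Submission
  imports Defs
begin

text \<open>
  Put \<open>L k = \<M>\<^sup>-\<^sup>1 \<langle>k,\<cdot>\<rangle>\<close> for \<open>k \<in> \<H>\<close>. It is a composition of continuous maps
  \<open>\<H> \<rightarrow> \<D>\<^sup>\<times> \<rightarrow> \<D>[t] \<rightarrow> \<H>\<close>, hence a bounded linear map, and by construction \<open>L k\<close> lies in
  the domain of \<open>M\<close> with \<open>M (L k) = k\<close>, while \<open>L (M f) = f\<close> by injectivity of \<open>\<M>\<close>.
  So \<open>M\<close> is bijective with the bounded inverse \<open>L\<close>, hence closed; its domain \<open>L(\<H>)\<close>
  is the image of the dense subspace \<open>\<H>\<close> of \<open>\<D>\<^sup>\<times>\<close> under the continuous surjection
  \<open>\<M>\<^sup>-\<^sup>1\<close>, so it is dense in \<open>\<D>[t]\<close> and a fortiori in \<open>\<H>\<close>.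

  The multiplier with data \<open>(m\<^sup>*, \<theta>, \<omega>)\<close> is formally adjoint to \<open>M\<close>, which gives one
  inclusion of the adjoint. Conversely, if \<open>\<langle>M f, g\<rangle> = \<langle>f, h\<rangle>\<close> on the domain of \<open>M\<close>,
  then \<open>F \<mapsto> \<langle>h, \<M>\<^sup>-\<^sup>1 F\<rangle>\<close> is a continuous conjugate-linear functional on \<open>\<D>\<^sup>\<times>\<close>;
  by reflexivity it is evaluation at some \<open>g' \<in> \<D>\<close>, and testing against \<open>F = \<M> (L k)\<close>
  shows \<open>g' = g\<close>, so that \<open>g \<in> \<D>\<close> and \<open>\<langle>\<M>' g, f\<rangle> = \<langle>h, f\<rangle>\<close>.
\<close>

subsection \<open>Complex inner product spaces\<close>

lemma cscale_zero_left [simp]: "cscale 0 (x::'a::chilbert) = 0"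
  using cscale_add_left[of 0 0 x] by simp

lemma cinner_zero_left [simp]: "cinner (0::'a::chilbert) y = 0"
  using cinner_add_left[of 0 0 y] by simp

lemma cinner_zero_right [simp]: "cinner (y::'a::chilbert) 0 = 0"
  using cinner_commute[of 0 y] by simp

lemma cinner_add_right: "cinner (x::'a::chilbert) (y + z) = cinner x y + cinner x z"
  by (metis cinner_add_left cinner_commute complex_cnj_add)

lemma cinner_scale_right: "cinner (x::'a::chilbert) (cscale a y) = cnj a * cinner x y"
  by (metis cinner_scale_left cinner_commute complex_cnj_mult)

lemma cinner_minus_left: "cinner (- (x::'a::chilbert)) y = - cinner x y"
  using cinner_add_left[of x "-x" y] by (simp add: eq_neg_iff_add_eq_0 add.commute)

lemma cinner_minus_right: "cinner (x::'a::chilbert) (- y) = - cinner x y"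
  by (metis cinner_minus_left cinner_commute complex_cnj_minus)

lemma cinner_diff_left: "cinner ((x::'a::chilbert) - y) z = cinner x z - cinner y z"
  unfolding diff_conv_add_uminus by (simp only: cinner_add_left cinner_minus_left)

lemma cinner_diff_right: "cinner (x::'a::chilbert) (y - z) = cinner x y - cinner x z"
  unfolding diff_conv_add_uminus by (simp only: cinner_add_right cinner_minus_right)

lemma cinner_self_real: "cinner (x::'a::chilbert) x = complex_of_real (Re (cinner x x))"
  by (metis cinner_commute complex_is_Real_iff Reals_cnj_iff of_real_Re)

lemma cnorm_ge_zero [simp]: "cnorm x \<ge> 0"
  by (simp add: cnorm_def cinner_nonneg)

lemma power2_cnorm: "(cnorm x)\<^sup>2 = Re (cinner x x)"
  by (simp add: cnorm_def cinner_nonneg)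

lemma cnorm_eq_zero [simp]: "cnorm x = 0 \<longleftrightarrow> x = 0"
  by (metis cinner_eq_zero cinner_self_real cnorm_def of_real_0 real_sqrt_eq_zero_cancel_iff
      zero_complex.simps(1))

lemma cnorm_zero [simp]: "cnorm 0 = 0"
  by simp

lemma cnorm_pos: "x \<noteq> 0 \<Longrightarrow> cnorm x > 0"
  using cnorm_ge_zero[of x] cnorm_eq_zero[of x] by linarith

lemma cauchy_schwarz_cinner: "(cmod (cinner (x::'a::chilbert) y))\<^sup>2 \<le> Re (cinner x x) * Re (cinner y y)"
proof (cases "y = 0")
  case True
  then show ?thesis by simp
next
  case False
  define ny where "ny = Re (cinner y y)"
  have ny_pos: "ny > 0"
    unfolding ny_def power2_cnorm[symmetric] using False by simp
  have yy: "cinner y y = complex_of_real ny"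
    using cinner_self_real ny_def by simp
  define a where "a = cinner x y / complex_of_real ny"
  define X where "X = cinner x y * cnj (cinner x y) / complex_of_real ny"
  have nz: "complex_of_real ny \<noteq> 0" using ny_pos by simp
  have coeffs: "cnj a * cinner x y = X" "a * cnj (cinner x y) = X" "a * cnj a * complex_of_real ny = X"
    using nz by (simp_all add: a_def X_def field_simps)
  have X: "X = complex_of_real ((cmod (cinner x y))\<^sup>2 / ny)"
    unfolding X_def complex_norm_square[symmetric] by simp
  have "cinner (x - cscale a y) (x - cscale a y)
      = cinner x x - cnj a * cinner x y - a * cinner y x + a * cnj a * cinner y y"
    by (simp add: cinner_diff_left cinner_diff_right cinner_scale_left cinner_scale_right algebra_simps)
  also have "\<dots> = cinner x x - complex_of_real ((cmod (cinner x y))\<^sup>2 / ny)"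
    unfolding yy cinner_commute[of y x] coeffs X[symmetric] by simp
  finally have "0 \<le> Re (cinner x x) - (cmod (cinner x y))\<^sup>2 / ny"
    using cinner_nonneg[of "x - cscale a y"] by (metis Re_complex_of_real minus_complex.sel(1))
  then show ?thesis
    using ny_pos unfolding ny_def by (simp add: pos_divide_le_eq)
qed

lemma cinner_cnorm_le: "cmod (cinner x y) \<le> cnorm x * cnorm y"
proof -
  have "(cmod (cinner x y))\<^sup>2 \<le> (cnorm x * cnorm y)\<^sup>2"
    using cauchy_schwarz_cinner[of x y] by (simp add: power_mult_distrib power2_cnorm)
  then show ?thesis by (simp add: power_mono_iff)
qed

lemma cnorm_cscale: "cnorm (cscale c (x::'a::chilbert)) = cmod c * cnorm x"
proof -
  have "Re (cinner (cscale c x) (cscale c x)) = (cmod c)\<^sup>2 * Re (cinner x x)"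
    by (subst cinner_self_real)
      (simp add: cinner_scale_left cinner_scale_right mult.assoc[symmetric] complex_mult_cnj
        power2_eq_square flip: of_real_mult, metis cmod_power2 power2_eq_square)
  then show ?thesis by (simp add: cnorm_def real_sqrt_mult)
qed

lemma cnorm_minus_commute: "cnorm ((x::'a::chilbert) - y) = cnorm (y - x)"
  by (metis cnorm_def cinner_minus_left cinner_minus_right minus_minus minus_diff_eq)

lemma cnorm_triangle: "cnorm ((x::'a::chilbert) + y) \<le> cnorm x + cnorm y"
proof -
  have "Re (cinner y x) = Re (cinner x y)"
    by (subst cinner_commute) simp
  then have sq: "Re (cinner (x + y) (x + y)) = Re (cinner x x) + Re (cinner y y) + 2 * Re (cinner x y)"
    by (simp add: cinner_add_left cinner_add_right)
  have "Re (cinner x y) \<le> cnorm x * cnorm y"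
    using cinner_cnorm_le[of x y] complex_Re_le_cmod[of "cinner x y"] by linarith
  then have "(cnorm (x + y))\<^sup>2 \<le> (cnorm x + cnorm y)\<^sup>2"
    unfolding power2_cnorm sq power2_sum by (simp add: power2_cnorm)
  then show ?thesis using power2_le_imp_le by fastforce
qed

lemma cnorm_triangle_diff: "cnorm ((x::'a::chilbert) - z) \<le> cnorm (x - y) + cnorm (y - z)"
  using cnorm_triangle[of "x - y" "y - z"] by simp

subsection \<open>The norm topology\<close>

lemma istopology_cnorm_open:
  "istopology (\<lambda>U::'a::chilbert set. \<forall>x\<in>U. \<exists>e>0. \<forall>y. cnorm (y - x) < e \<longrightarrow> y \<in> U)"
  unfolding istopology_def
proof (intro conjI allI impI)
  fix S T :: "'a set"
  assume S: "\<forall>x\<in>S. \<exists>e>0. \<forall>y. cnorm (y - x) < e \<longrightarrow> y \<in> S"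
    and T: "\<forall>x\<in>T. \<exists>e>0. \<forall>y. cnorm (y - x) < e \<longrightarrow> y \<in> T"
  show "\<forall>x\<in>S \<inter> T. \<exists>e>0. \<forall>y. cnorm (y - x) < e \<longrightarrow> y \<in> S \<inter> T"
  proof
    fix x assume x: "x \<in> S \<inter> T"
    obtain e1 where "e1 > 0" "\<forall>y. cnorm (y - x) < e1 \<longrightarrow> y \<in> S" using S x by blast
    moreover obtain e2 where "e2 > 0" "\<forall>y. cnorm (y - x) < e2 \<longrightarrow> y \<in> T" using T x by blast
    ultimately show "\<exists>e>0. \<forall>y. cnorm (y - x) < e \<longrightarrow> y \<in> S \<inter> T"
      by (intro exI[of _ "min e1 e2"]) auto
  qed
next
  fix K :: "'a set set"
  assume "\<forall>U\<in>K. \<forall>x\<in>U. \<exists>e>0. \<forall>y. cnorm (y - x) < e \<longrightarrow> y \<in> U"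
  then show "\<forall>x\<in>\<Union>K. \<exists>e>0. \<forall>y. cnorm (y - x) < e \<longrightarrow> y \<in> \<Union>K"
    by (meson UnionE UnionI)
qed

lemma openin_cnorm_top:
  "openin cnorm_top U \<longleftrightarrow> (\<forall>x\<in>U. \<exists>e>0. \<forall>y. cnorm (y - x) < e \<longrightarrow> y \<in> U)"
  unfolding cnorm_top_def by (simp add: topology_inverse'[OF istopology_cnorm_open])

lemma topspace_cnorm_top [simp]: "topspace cnorm_top = UNIV"
proof -
  have "openin cnorm_top UNIV"
    unfolding openin_cnorm_top by (auto intro: exI[of _ 1])
  then show ?thesis using openin_subset by blast
qed

lemma openin_cnorm_ball: "openin cnorm_top {y. cnorm (y - x) < e}"
  unfolding openin_cnorm_top
proof (intro ballI)
  fix z assume "z \<in> {y. cnorm (y - x) < e}"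
  then have z: "cnorm (z - x) < e" by simp
  show "\<exists>d>0. \<forall>y. cnorm (y - z) < d \<longrightarrow> y \<in> {y. cnorm (y - x) < e}"
  proof (intro exI[of _ "e - cnorm (z - x)"] conjI allI impI)
    fix y assume "cnorm (y - z) < e - cnorm (z - x)"
    then show "y \<in> {y. cnorm (y - x) < e}"
      using cnorm_triangle_diff[of y x z] by simp
  qed (use z in simp)
qed

lemma limitin_cnorm_top: "limitin cnorm_top X f sequentially \<longleftrightarrow> (\<lambda>n. cnorm (X n - f)) \<longlonglongrightarrow> 0"
proof
  assume L: "limitin cnorm_top X f sequentially"
  show "(\<lambda>n. cnorm (X n - f)) \<longlonglongrightarrow> 0"
  proof (rule LIMSEQ_I)
    fix r :: real assume "r > 0"
    then have "f \<in> {y. cnorm (y - f) < r}" by simp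
    then obtain N where "\<forall>n\<ge>N. X n \<in> {y. cnorm (y - f) < r}"
      using L openin_cnorm_ball unfolding limitin_sequentially by blast
    then show "\<exists>N. \<forall>n\<ge>N. norm (cnorm (X n - f) - 0) < r" by auto
  qed
next
  assume L: "(\<lambda>n. cnorm (X n - f)) \<longlonglongrightarrow> 0"
  show "limitin cnorm_top X f sequentially"
    unfolding limitin_sequentially
  proof safe
    fix U assume "openin cnorm_top U" "f \<in> U"
    then obtain e where e: "e > 0" "\<forall>y. cnorm (y - f) < e \<longrightarrow> y \<in> U"
      unfolding openin_cnorm_top by blast
    then obtain N where "\<forall>n\<ge>N. norm (cnorm (X n - f) - 0) < e" using L LIMSEQ_D by blast
    then show "\<exists>N. \<forall>n\<ge>N. X n \<in> U" using e by auto
  qed simp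
qed

lemma limitin_cnorm_top_unique:
  assumes a: "limitin cnorm_top X a sequentially" and b: "limitin cnorm_top X b sequentially"
  shows "a = b"
proof -
  have sum: "(\<lambda>n. cnorm (X n - a) + cnorm (X n - b)) \<longlonglongrightarrow> 0"
    using tendsto_add[OF a[unfolded limitin_cnorm_top] b[unfolded limitin_cnorm_top]] by simp
  have "(\<lambda>n. cnorm (a - b)) \<longlonglongrightarrow> 0"
  proof (rule real_tendsto_sandwich[OF _ _ tendsto_const sum])
    show "\<forall>\<^sub>F n in sequentially. cnorm (a - b) \<le> cnorm (X n - a) + cnorm (X n - b)"
      using cnorm_triangle_diff[of a b] cnorm_minus_commute[of a] by (intro always_eventually) simp
  qed simp
  then have "cnorm (a - b) = 0"
    using LIMSEQ_const_iff by blast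
  then show "a = b" by simp
qed

lemma in_closure_of_cnorm_top: "x \<in> cnorm_top closure_of S \<longleftrightarrow> (\<forall>e>0. \<exists>y\<in>S. cnorm (y - x) < e)"
  unfolding in_closure_of
proof safe
  fix e :: real
  assume A: "\<forall>T. x \<in> T \<and> openin cnorm_top T \<longrightarrow> (\<exists>y. y \<in> S \<and> y \<in> T)" and "e > 0"
  have "x \<in> {y. cnorm (y - x) < e}"
    using \<open>e > 0\<close> by simp
  then show "\<exists>y\<in>S. cnorm (y - x) < e"
    using A(1)[rule_format, OF conjI[OF _ openin_cnorm_ball]] by blast
next
  fix T assume "\<forall>e>0. \<exists>y\<in>S. cnorm (y - x) < e" "x \<in> T" "openin cnorm_top T"
  then show "\<exists>y. y \<in> S \<and> y \<in> T" unfolding openin_cnorm_top by blast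
qed simp

lemma cinner_dense_eq_zero:
  assumes "cnorm_top closure_of S = UNIV" "\<forall>g\<in>S. cinner (k::'a::chilbert) g = 0"
  shows "k = 0"
proof (rule ccontr)
  assume "k \<noteq> 0"
  then obtain g where g: "g \<in> S" "cnorm (g - k) < cnorm k"
    using assms(1) cnorm_pos[of k] in_closure_of_cnorm_top[of k S] by blast
  have "cinner g k = 0"
    using assms(2) g(1) cinner_commute[of g k] by simp
  then have "(cnorm (g - k))\<^sup>2 = (cnorm g)\<^sup>2 + (cnorm k)\<^sup>2"
    by (simp add: power2_cnorm cinner_diff_left cinner_diff_right cinner_commute[of k g])
  then have "(cnorm k)\<^sup>2 \<le> (cnorm (g - k))\<^sup>2" by simp
  then show False
    using g(2) by (meson not_le power_strict_mono cnorm_ge_zero zero_less_numeral)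
qed

lemma continuous_map_cinner_right: "continuous_map cnorm_top euclidean (cinner (h::'a::chilbert))"
  unfolding continuous_map topspace_cnorm_top
proof safe
  fix U :: "complex set" assume "openin euclidean U"
  then have oU: "open U" by simp
  show "openin cnorm_top {x \<in> UNIV. cinner h x \<in> U}"
    unfolding openin_cnorm_top
  proof safe
    fix x assume "cinner h x \<in> U"
    then obtain r where r: "r > 0" "ball (cinner h x) r \<subseteq> U"
      using oU open_contains_ball by blast
    have hp: "cnorm h + 1 > 0" using cnorm_ge_zero[of h] by linarith
    show "\<exists>e>0. \<forall>y. cnorm (y - x) < e \<longrightarrow> y \<in> {x \<in> UNIV. cinner h x \<in> U}"
    proof (intro exI[of _ "r / (cnorm h + 1)"] conjI allI impI)
      show "r / (cnorm h + 1) > 0" using r hp by simp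
      fix y assume y: "cnorm (y - x) < r / (cnorm h + 1)"
      have "cmod (cinner h y - cinner h x) \<le> cnorm h * cnorm (y - x)"
        using cinner_cnorm_le[of h "y - x"] by (simp add: cinner_diff_right)
      also have "\<dots> \<le> (cnorm h + 1) * cnorm (y - x)" by (simp add: mult_right_mono)
      also have "\<dots> < r" using y hp by (simp add: field_simps)
      finally show "y \<in> {x \<in> UNIV. cinner h x \<in> U}"
        using r by (auto simp: dist_norm norm_minus_commute)
    qed
  qed
qed simp

lemma cnorm_bounded_if_continuous:
  fixes L :: "'a::chilbert \<Rightarrow> 'b::chilbert"
  assumes cont: "continuous_map cnorm_top cnorm_top L"
    and scale: "\<And>c h. L (cscale c h) = cscale c (L h)"
  shows "\<exists>C. \<forall>h. cnorm (L h) \<le> C * cnorm h"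
proof -
  have L0: "L 0 = 0"
    using scale[of 0 0] by simp
  have "openin cnorm_top {x \<in> topspace cnorm_top. L x \<in> {y. cnorm (y - 0) < 1}}"
    by (rule openin_continuous_map_preimage[OF cont openin_cnorm_ball])
  then have "openin cnorm_top {x. cnorm (L x) < 1}" by simp
  moreover have "0 \<in> {x. cnorm (L x) < 1}" by (simp add: L0)
  ultimately obtain e where e: "e > 0" "\<forall>y. cnorm (y - 0) < e \<longrightarrow> y \<in> {x. cnorm (L x) < 1}"
    unfolding openin_cnorm_top by blast
  show ?thesis
  proof (intro exI[of _ "2 / e"] allI)
    fix h
    show "cnorm (L h) \<le> 2 / e * cnorm h"
    proof (cases "h = 0")
      case True
      then show ?thesis by (simp add: L0)
    next
      case False
      then have hp: "cnorm h > 0" by (rule cnorm_pos)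
      define c where "c = e / (2 * cnorm h)"
      have cp: "c > 0" using hp e(1) unfolding c_def by simp
      have "cnorm (cscale (complex_of_real c) h) = c * cnorm h"
        using cp by (simp add: cnorm_cscale)
      also have "\<dots> = e / 2"
        using False by (simp add: c_def)
      finally have "cnorm (L (cscale (complex_of_real c) h)) < 1"
        using e by simp
      then have "c * cnorm (L h) < 1"
        using cp unfolding scale cnorm_cscale by simp
      then have "cnorm (L h) < 1 / c"
        using cp by (simp add: field_simps)
      also have "1 / c = 2 / e * cnorm h"
        using e(1) hp by (simp add: c_def)
      finally show ?thesis by simp
    qed
  qed
qed

lemma closed_op_if_bounded_inverse:
  assumes inv: "\<And>h. L h \<in> S" "\<And>h. T (L h) = h" "\<And>f. f \<in> S \<Longrightarrow> L (T f) = f"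
    and diff: "\<And>x y. L (x - y) = L x - L y"
    and bound: "\<And>h. cnorm (L h) \<le> C * cnorm h"
  shows "closed_op S T"
  unfolding closed_op_def
proof (intro allI impI, elim conjE)
  fix X f h
  assume X: "\<forall>n. X n \<in> S" and f: "limitin cnorm_top X f sequentially"
    and h: "limitin cnorm_top (\<lambda>n. T (X n)) h sequentially"
  have "(\<lambda>n. C * cnorm (T (X n) - h)) \<longlonglongrightarrow> 0"
    using h tendsto_mult_right_zero unfolding limitin_cnorm_top by blast
  then have "(\<lambda>n. cnorm (L (T (X n)) - L h)) \<longlonglongrightarrow> 0"
    by (rule real_tendsto_sandwich[OF _ _ tendsto_const, rotated 2])
      (use bound in \<open>auto simp flip: diff\<close>)
  then have "limitin cnorm_top X (L h) sequentially"
    using X inv(3) unfolding limitin_cnorm_top by simp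
  then have "f = L h"
    using f limitin_cnorm_top_unique by blast
  then show "f \<in> S \<and> T f = h" by (simp add: inv)
qed

subsection \<open>Conjugate duals and the strong topology\<close>

lemma conj_dual_add:
  "F \<in> conj_dual add scal z T \<Longrightarrow> x \<in> topspace T \<Longrightarrow> y \<in> topspace T \<Longrightarrow> F (add x y) = F x + F y"
  unfolding conj_dual_def by blast

lemma conj_dual_scal:
  "F \<in> conj_dual add scal z T \<Longrightarrow> x \<in> topspace T \<Longrightarrow> F (scal c x) = cnj c * F x"
  unfolding conj_dual_def by blast

lemma conj_dualI:
  "(\<forall>x\<in>topspace T. \<forall>y\<in>topspace T. F (add x y) = F x + F y) \<Longrightarrow>
   (\<forall>c. \<forall>x\<in>topspace T. F (scal c x) = cnj c * F x) \<Longrightarrow>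
   continuous_map T euclidean F \<Longrightarrow> (\<forall>x. x \<notin> topspace T \<longrightarrow> F x = 0) \<Longrightarrow>
   F \<in> conj_dual add scal z T"
  unfolding conj_dual_def by blast

lemma tvs_bounded_empty: "tvs_bounded add scal z T {}"
  unfolding tvs_bounded_def by (auto intro: exI[of _ 1])

lemma tvs_bounded_Un:
  assumes "tvs_bounded add scal z T B1" "tvs_bounded add scal z T B2"
  shows "tvs_bounded add scal z T (B1 \<union> B2)"
  unfolding tvs_bounded_def
proof (intro conjI allI impI)
  show "B1 \<union> B2 \<subseteq> topspace T"
    using assms unfolding tvs_bounded_def by auto
  fix U assume U: "openin T U \<and> z \<in> U"
  obtain r1 where "r1 > 0" "\<forall>c. cmod c \<le> r1 \<longrightarrow> (\<forall>x\<in>B1. scal c x \<in> U)"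
    using assms(1) U unfolding tvs_bounded_def by blast
  moreover obtain r2 where "r2 > 0" "\<forall>c. cmod c \<le> r2 \<longrightarrow> (\<forall>x\<in>B2. scal c x \<in> U)"
    using assms(2) U unfolding tvs_bounded_def by blast
  ultimately show "\<exists>r>0. \<forall>c. cmod c \<le> r \<longrightarrow> (\<forall>x\<in>B1 \<union> B2. scal c x \<in> U)"
    by (intro exI[of _ "min r1 r2"]) auto
qed

definition strong_open :: "('a \<Rightarrow> 'a \<Rightarrow> 'a) \<Rightarrow> (complex \<Rightarrow> 'a \<Rightarrow> 'a) \<Rightarrow> 'a \<Rightarrow> 'a topology \<Rightarrow>
    ('a \<Rightarrow> complex) set \<Rightarrow> bool" where
  "strong_open add scal z T U \<longleftrightarrow> U \<subseteq> conj_dual add scal z T \<and>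
     (\<forall>F\<in>U. \<exists>B e. tvs_bounded add scal z T B \<and> e > 0 \<and>
        {G \<in> conj_dual add scal z T. \<forall>f\<in>B. cmod (G f - F f) < e} \<subseteq> U)"

lemma istopology_strong_open: "istopology (strong_open add scal z T)"
  unfolding istopology_def
proof (intro conjI allI impI)
  fix S U assume S: "strong_open add scal z T S" and U: "strong_open add scal z T U"
  show "strong_open add scal z T (S \<inter> U)"
    unfolding strong_open_def
  proof (intro conjI ballI)
    show "S \<inter> U \<subseteq> conj_dual add scal z T"
      using S unfolding strong_open_def by auto
    fix F assume F: "F \<in> S \<inter> U"
    obtain B1 e1 where 1: "tvs_bounded add scal z T B1" "e1 > 0"
      "{G \<in> conj_dual add scal z T. \<forall>f\<in>B1. cmod (G f - F f) < e1} \<subseteq> S"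
      using S F unfolding strong_open_def by blast
    obtain B2 e2 where 2: "tvs_bounded add scal z T B2" "e2 > 0"
      "{G \<in> conj_dual add scal z T. \<forall>f\<in>B2. cmod (G f - F f) < e2} \<subseteq> U"
      using U F unfolding strong_open_def by blast
    show "\<exists>B e. tvs_bounded add scal z T B \<and> e > 0 \<and>
        {G \<in> conj_dual add scal z T. \<forall>f\<in>B. cmod (G f - F f) < e} \<subseteq> S \<inter> U"
      using 1 2 by (intro exI[of _ "B1 \<union> B2"] exI[of _ "min e1 e2"]) (auto intro: tvs_bounded_Un)
  qed
next
  fix K assume K: "\<forall>S\<in>K. strong_open add scal z T S"
  show "strong_open add scal z T (\<Union>K)"
    unfolding strong_open_def
  proof (intro conjI ballI)
    show "\<Union>K \<subseteq> conj_dual add scal z T"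
      using K unfolding strong_open_def by blast
    fix F assume "F \<in> \<Union>K"
    then obtain S where S: "S \<in> K" "F \<in> S" by blast
    then obtain B e where "tvs_bounded add scal z T B" "e > 0"
      "{G \<in> conj_dual add scal z T. \<forall>f\<in>B. cmod (G f - F f) < e} \<subseteq> S"
      using K unfolding strong_open_def by blast
    then show "\<exists>B e. tvs_bounded add scal z T B \<and> e > 0 \<and>
        {G \<in> conj_dual add scal z T. \<forall>f\<in>B. cmod (G f - F f) < e} \<subseteq> \<Union>K"
      using S(1) by blast
  qed
qed

lemma topspace_strong_top [simp]: "topspace (strong_top add scal z T) = conj_dual add scal z T"
proof -
  have openin: "openin (strong_top add scal z T) = strong_open add scal z T"
    unfolding strong_top_def strong_open_def[abs_def]
    by (rule topology_inverse'[OF istopology_strong_open[unfolded strong_open_def[abs_def]]])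
  have "strong_open add scal z T (conj_dual add scal z T)"
    unfolding strong_open_def
    by (auto intro!: exI[of _ "{}"] exI[of _ "1::real"] simp: tvs_bounded_empty)
  then have "conj_dual add scal z T \<subseteq> topspace (strong_top add scal z T)"
    using openin_subset by (metis openin)
  moreover have "topspace (strong_top add scal z T) \<subseteq> conj_dual add scal z T"
    using openin_topspace[of "strong_top add scal z T"] unfolding openin strong_open_def by blast
  ultimately show ?thesis by blast
qed

lemma integrable_bessel_product:
  assumes a: "(\<lambda>x. cnj (a x)) \<in> borel_measurable \<mu>" "(\<integral>\<^sup>+x. ennreal ((cmod (a x))\<^sup>2) \<partial>\<mu>) < \<infinity>"
    and b: "(\<lambda>x. cnj (b x)) \<in> borel_measurable \<mu>" "(\<integral>\<^sup>+x. ennreal ((cmod (b x))\<^sup>2) \<partial>\<mu>) < \<infinity>"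
    and m: "m \<in> borel_measurable \<mu>" "AE x in \<mu>. cmod (m x) \<le> C"
  shows "integrable \<mu> (\<lambda>x. m x * cnj (a x) * b x)"
proof -
  have cnj_meas: "f \<in> borel_measurable \<mu>" if "(\<lambda>x. cnj (f x)) \<in> borel_measurable \<mu>" for f
    using borel_measurable_continuous_on[OF continuous_on_cnj[OF continuous_on_id] that] by simp
  have square_integrable: "integrable \<mu> (\<lambda>x. (cmod (f x))\<^sup>2)"
    if "(\<lambda>x. cnj (f x)) \<in> borel_measurable \<mu>" "(\<integral>\<^sup>+x. ennreal ((cmod (f x))\<^sup>2) \<partial>\<mu>) < \<infinity>" for f
    using cnj_meas[OF that(1)] that(2) unfolding integrable_iff_bounded by simp
  define C' where "C' = max C 0"
  have "integrable \<mu> (\<lambda>x. C' * ((cmod (a x))\<^sup>2 + (cmod (b x))\<^sup>2))"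
    using square_integrable[OF a] square_integrable[OF b] by (intro integrable_mult_right Bochner_Integration.integrable_add)
  moreover have "(\<lambda>x. m x * cnj (a x) * b x) \<in> borel_measurable \<mu>"
    using cnj_meas[OF b(1)] a(1) m(1) by measurable
  moreover have "AE x in \<mu>. norm (m x * cnj (a x) * b x) \<le> norm (C' * ((cmod (a x))\<^sup>2 + (cmod (b x))\<^sup>2))"
    using m(2)
  proof eventually_elim
    case (elim x)
    have "cmod (a x) * cmod (b x) \<le> (cmod (a x))\<^sup>2 + (cmod (b x))\<^sup>2"
      using sum_squares_ge_zero[of "cmod (a x) - cmod (b x)" 0]
      by (simp add: power2_eq_square algebra_simps) (smt (verit) mult_nonneg_nonneg norm_ge_zero)
    then have "cmod (m x) * (cmod (a x) * cmod (b x)) \<le> C' * ((cmod (a x))\<^sup>2 + (cmod (b x))\<^sup>2)"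
      using elim unfolding C'_def by (intro mult_mono) auto
    moreover have "0 \<le> C'" unfolding C'_def by simp
    ultimately show ?case by (simp add: norm_mult)
  qed
  ultimately show ?thesis by (rule Bochner_Integration.integrable_bound)
qed

subsection \<open>Distribution multipliers\<close>

lemma hemb_add: "hemb D (h1 + h2) = fadd (hemb D h1) (hemb D h2)"
  by (auto simp: hemb_def fadd_def cinner_add_left)

lemma hemb_scal: "hemb D (cscale c h) = fscal c (hemb D h)"
  by (auto simp: hemb_def fscal_def cinner_scale_left)

lemma outer_mult_eq_hemb_iff: "outer_mult \<mu> D m \<omega> \<theta> f = hemb D k \<longleftrightarrow> (\<forall>g\<in>D. outer_mult \<mu> D m \<omega> \<theta> f g = cinner k g)"
  by (auto simp: hemb_def outer_mult_def fun_eq_iff)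

lemma outer_mult_cnj_swap:
  assumes "f \<in> D" "g \<in> D"
  shows "outer_mult \<mu> D (\<lambda>x. cnj (m x)) \<theta> \<omega> g f = cnj (outer_mult \<mu> D m \<omega> \<theta> f g)"
proof -
  have "cnj (\<integral>x. m x * cnj (\<omega> x f) * \<theta> x g \<partial>\<mu>) = (\<integral>x. cnj (m x * cnj (\<omega> x f) * \<theta> x g) \<partial>\<mu>)"
    by (rule Bochner_Integration.integral_cnj[symmetric])
  also have "\<dots> = (\<integral>x. cnj (m x) * cnj (\<theta> x g) * \<omega> x f \<partial>\<mu>)"
    by (simp add: algebra_simps)
  finally show ?thesis using assms unfolding outer_mult_def by simp
qed

lemma dmult_eqI:
  assumes "cnorm_top closure_of D = UNIV" "\<forall>g\<in>D. outer_mult \<mu> D m \<omega> \<theta> f g = cinner k g"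
  shows "dmult \<mu> D m \<omega> \<theta> f = k"
  unfolding dmult_def
proof (rule the_equality)
  fix h assume "\<forall>g\<in>D. outer_mult \<mu> D m \<omega> \<theta> f g = cinner h g"
  then have "\<forall>g\<in>D. cinner (h - k) g = 0"
    using assms(2) by (simp add: cinner_diff_left)
  then have "h - k = 0"
    by (rule cinner_dense_eq_zero[OF assms(1)])
  then show "h = k" by simp
qed (use assms in blast)

lemma dmult_dom_D: "f \<in> dmult_dom \<mu> D m \<omega> \<theta> \<Longrightarrow> f \<in> D"
  unfolding dmult_dom_def by blast

lemma outer_mult_dmult:
  assumes "cnorm_top closure_of D = UNIV" "f \<in> dmult_dom \<mu> D m \<omega> \<theta>"
  shows "\<forall>g\<in>D. outer_mult \<mu> D m \<omega> \<theta> f g = cinner (dmult \<mu> D m \<omega> \<theta> f) g"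
proof -
  obtain k where k: "\<forall>g\<in>D. outer_mult \<mu> D m \<omega> \<theta> f g = cinner k g"
    using assms(2) unfolding dmult_dom_def by blast
  then show ?thesis
    using dmult_eqI[OF assms(1) k] by simp
qed

lemma adj_eqI:
  assumes "cnorm_top closure_of S = UNIV" "\<forall>f\<in>S. cinner (T f) g = cinner f k"
  shows "adj S T g = k"
  unfolding adj_def
proof (rule the_equality)
  fix h assume "\<forall>f\<in>S. cinner (T f) g = cinner f h"
  then have "\<forall>f\<in>S. cinner (h - k) f = 0"
    using assms(2) by (metis cinner_commute cinner_diff_right complex_cnj_zero diff_self)
  then have "h - k = 0"
    by (rule cinner_dense_eq_zero[OF assms(1)])
  then show "h = k" by simp
qed (use assms in blast)

lemma continuous_map_rigged_inclusion:
  assumes "rigged_hilbert D t"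
  shows "continuous_map t cnorm_top (\<lambda>x. x)"
  unfolding continuous_map topspace_cnorm_top
proof (intro conjI allI impI)
  fix U :: "'a set" assume "openin cnorm_top U"
  then have "openin t (U \<inter> D)" and "topspace t = D"
    using assms unfolding rigged_hilbert_def by blast+
  moreover have "{x \<in> D. x \<in> U} = U \<inter> D" by blast
  ultimately show "openin t {x \<in> topspace t. x \<in> U}" by simp
qed simp

locale invertible_outer_multiplier =
  fixes D :: "'h::chilbert set" and t :: "'h topology"
    and \<mu> :: "'x measure" and m :: "'x \<Rightarrow> complex"
    and \<omega> \<theta> :: "'x \<Rightarrow> 'h \<Rightarrow> complex"
  assumes rigged: "rigged_hilbert D t"
    and bessel_\<omega>: "bessel_map \<mu> t \<omega>"
    and bessel_\<theta>: "bessel_map \<mu> t \<theta>"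
    and m_meas: "m \<in> borel_measurable \<mu>"
    and m_bdd: "\<exists>C. AE x in \<mu>. cmod (m x) \<le> C"
    and bij: "bij_betw (outer_mult \<mu> D m \<omega> \<theta>) D (Dcross t)"
    and inv_cont: "continuous_map (Dcross_top t) t (the_inv_into D (outer_mult \<mu> D m \<omega> \<theta>))"
begin

abbreviation "M_out \<equiv> outer_mult \<mu> D m \<omega> \<theta>"
abbreviation "M_out_inv \<equiv> the_inv_into D M_out"
abbreviation "M_dom \<equiv> dmult_dom \<mu> D m \<omega> \<theta>"
abbreviation "M \<equiv> dmult \<mu> D m \<omega> \<theta>"

lemma topspace_t: "topspace t = D"
  and dense_D: "cnorm_top closure_of D = UNIV"
  and hemb_in_Dcross: "hemb D h \<in> Dcross t"
  and continuous_hemb: "continuous_map cnorm_top (Dcross_top t) (hemb D)"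
  and dense_hemb: "Dcross_top t closure_of (range (hemb D)) = Dcross t"
  using rigged unfolding rigged_hilbert_def by blast+

lemma D_subspace: "f \<in> D \<Longrightarrow> g \<in> D \<Longrightarrow> f + g \<in> D" "f \<in> D \<Longrightarrow> cscale c f \<in> D"
  using rigged topspace_t unfolding rigged_hilbert_def lctvs_def lin_subspace_def by auto

lemma integrable_outer: "f \<in> D \<Longrightarrow> g \<in> D \<Longrightarrow> integrable \<mu> (\<lambda>x. m x * cnj (\<omega> x f) * \<theta> x g)"
  using m_bdd m_meas bessel_\<omega> bessel_\<theta> topspace_t
  by (auto simp: bessel_map_def intro: integrable_bessel_product)

lemma outer_mult_add: "f1 \<in> D \<Longrightarrow> f2 \<in> D \<Longrightarrow> M_out (f1 + f2) = fadd (M_out f1) (M_out f2)"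
proof (rule ext)
  fix g assume f: "f1 \<in> D" "f2 \<in> D"
  have "\<omega> x (f1 + f2) = \<omega> x f1 + \<omega> x f2" if "x \<in> space \<mu>" for x
    using bessel_\<omega> f that topspace_t conj_dual_add by (fastforce simp: bessel_map_def)
  then have "(\<integral>x. m x * cnj (\<omega> x (f1 + f2)) * \<theta> x g \<partial>\<mu>)
      = (\<integral>x. m x * cnj (\<omega> x f1) * \<theta> x g + m x * cnj (\<omega> x f2) * \<theta> x g \<partial>\<mu>)"
    by (intro Bochner_Integration.integral_cong) (simp_all add: algebra_simps)
  moreover have "\<dots> = (\<integral>x. m x * cnj (\<omega> x f1) * \<theta> x g \<partial>\<mu>) + (\<integral>x. m x * cnj (\<omega> x f2) * \<theta> x g \<partial>\<mu>)"
    if "g \<in> D"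
    using integrable_outer[OF f(1) that] integrable_outer[OF f(2) that]
    by (rule Bochner_Integration.integral_add)
  ultimately show "M_out (f1 + f2) g = fadd (M_out f1) (M_out f2) g"
    unfolding outer_mult_def fadd_def by simp
qed

lemma outer_mult_scal: "f \<in> D \<Longrightarrow> M_out (cscale c f) = fscal c (M_out f)"
proof (rule ext)
  fix g assume f: "f \<in> D"
  have "\<omega> x (cscale c f) = cnj c * \<omega> x f" if "x \<in> space \<mu>" for x
    using bessel_\<omega> f that topspace_t conj_dual_scal by (fastforce simp: bessel_map_def)
  then have "(\<integral>x. m x * cnj (\<omega> x (cscale c f)) * \<theta> x g \<partial>\<mu>)
      = (\<integral>x. c * (m x * cnj (\<omega> x f) * \<theta> x g) \<partial>\<mu>)"
    by (intro Bochner_Integration.integral_cong) (simp_all add: algebra_simps)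
  also have "\<dots> = c * (\<integral>x. m x * cnj (\<omega> x f) * \<theta> x g \<partial>\<mu>)"
    by (rule integral_mult_right_zero)
  finally show "M_out (cscale c f) g = fscal c (M_out f) g"
    unfolding outer_mult_def fscal_def by simp
qed

lemma outer_mult_in_Dcross: "f \<in> D \<Longrightarrow> M_out f \<in> Dcross t"
  and outer_inv_in_D: "F \<in> Dcross t \<Longrightarrow> M_out_inv F \<in> D"
  and outer_mult_inv: "F \<in> Dcross t \<Longrightarrow> M_out (M_out_inv F) = F"
  and outer_inv_mult: "f \<in> D \<Longrightarrow> M_out_inv (M_out f) = f"
  using bij by (auto simp: bij_betw_def the_inv_into_into f_the_inv_into_f_bij_betw the_inv_into_f_f)

lemma outer_inv_add:
  "F1 \<in> Dcross t \<Longrightarrow> F2 \<in> Dcross t \<Longrightarrow> M_out_inv (fadd F1 F2) = M_out_inv F1 + M_out_inv F2"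
  by (metis D_subspace(1) outer_inv_in_D outer_inv_mult outer_mult_add outer_mult_inv)

lemma outer_inv_scal: "F \<in> Dcross t \<Longrightarrow> M_out_inv (fscal c F) = cscale c (M_out_inv F)"
  by (metis D_subspace(2) outer_inv_in_D outer_inv_mult outer_mult_scal outer_mult_inv)

lemma fadd_in_Dcross: "F1 \<in> Dcross t \<Longrightarrow> F2 \<in> Dcross t \<Longrightarrow> fadd F1 F2 \<in> Dcross t"
  by (metis D_subspace(1) outer_inv_in_D outer_mult_add outer_mult_in_Dcross outer_mult_inv)

lemma fscal_in_Dcross: "F \<in> Dcross t \<Longrightarrow> fscal c F \<in> Dcross t"
  by (metis D_subspace(2) outer_inv_in_D outer_mult_scal outer_mult_in_Dcross outer_mult_inv)

definition M_inv :: "'h \<Rightarrow> 'h" where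
  "M_inv k = M_out_inv (hemb D k)"

lemma M_inv_in_dom: "M_inv k \<in> M_dom"
  and M_M_inv: "M (M_inv k) = k"
proof -
  have "M_out (M_inv k) = hemb D k"
    unfolding M_inv_def by (rule outer_mult_inv[OF hemb_in_Dcross])
  then have "\<forall>g\<in>D. M_out (M_inv k) g = cinner k g"
    by (simp add: outer_mult_eq_hemb_iff)
  then show "M_inv k \<in> M_dom" "M (M_inv k) = k"
    using outer_inv_in_D[OF hemb_in_Dcross] dmult_eqI[OF dense_D]
    unfolding dmult_dom_def M_inv_def by auto
qed

lemma M_inv_M: "f \<in> M_dom \<Longrightarrow> M_inv (M f) = f"
  using outer_mult_dmult[OF dense_D] outer_inv_mult dmult_dom_D
  unfolding M_inv_def outer_mult_eq_hemb_iff[symmetric] by metis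

lemma M_inv_scal: "M_inv (cscale c h) = cscale c (M_inv h)"
  unfolding M_inv_def hemb_scal by (rule outer_inv_scal[OF hemb_in_Dcross])

lemma M_inv_diff: "M_inv (h1 - h2) = M_inv h1 - M_inv h2"
proof -
  have "M_inv (h1 - h2) + M_inv h2 = M_inv h1"
    unfolding M_inv_def using outer_inv_add[OF hemb_in_Dcross hemb_in_Dcross]
    by (metis diff_add_cancel hemb_add)
  then show ?thesis by (simp add: eq_diff_eq)
qed

lemma M_inv_bounded: "\<exists>C. \<forall>h. cnorm (M_inv h) \<le> C * cnorm h"
proof (rule cnorm_bounded_if_continuous[OF _ M_inv_scal])
  have "continuous_map cnorm_top cnorm_top ((\<lambda>x. x) \<circ> (M_out_inv \<circ> hemb D))"
    using continuous_hemb inv_cont continuous_map_rigged_inclusion[OF rigged]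
    by (intro continuous_map_compose)
  then show "continuous_map cnorm_top cnorm_top M_inv"
    unfolding M_inv_def[abs_def] comp_def .
qed

lemma inj_M: "inj_on M M_dom"
  by (metis M_inv_M inj_onI)

lemma bij_M: "bij_betw M M_dom UNIV"
  unfolding bij_betw_def
proof
  have "h \<in> M ` M_dom" for h
    using M_inv_in_dom[of h] M_M_inv[of h] by (metis image_eqI)
  then show "M ` M_dom = UNIV" by blast
qed (rule inj_M)

lemma the_inv_M: "the_inv_into M_dom M h = M_inv h"
  by (rule the_inv_into_f_eq[OF inj_M M_M_inv M_inv_in_dom])

lemma closed_M: "closed_op M_dom M"
proof -
  obtain C where C: "\<And>h. cnorm (M_inv h) \<le> C * cnorm h"
    using M_inv_bounded by blast
  show ?thesis
    by (rule closed_op_if_bounded_inverse[of M_inv, OF M_inv_in_dom M_M_inv M_inv_M M_inv_diff C])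
qed

lemma dense_M_dom: "cnorm_top closure_of M_dom = UNIV"
proof -
  have "D \<subseteq> cnorm_top closure_of M_dom"
  proof
    fix x assume x: "x \<in> D"
    show "x \<in> cnorm_top closure_of M_dom"
      unfolding in_closure_of
    proof (intro conjI allI impI, simp, elim conjE)
      fix U assume xU: "x \<in> U" and U: "openin cnorm_top U"
      then have "openin t (U \<inter> D)"
        using rigged unfolding rigged_hilbert_def by blast
      define V where "V = {G \<in> topspace (Dcross_top t). M_out_inv G \<in> U \<inter> D}"
      have "openin (Dcross_top t) V"
        unfolding V_def by (rule openin_continuous_map_preimage[OF inv_cont]) fact
      moreover have "M_out x \<in> V"
        unfolding V_def using outer_mult_in_Dcross[OF x] outer_inv_mult[OF x] x xU by simp
      moreover have "M_out x \<in> Dcross_top t closure_of (range (hemb D))"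
        using dense_hemb outer_mult_in_Dcross[OF x] by simp
      ultimately obtain G where "G \<in> range (hemb D)" "G \<in> V"
        unfolding in_closure_of by blast
      then obtain k where "M_out_inv (hemb D k) \<in> U"
        unfolding V_def by blast
      then show "\<exists>y. y \<in> M_dom \<and> y \<in> U"
        using M_inv_in_dom unfolding M_inv_def by blast
    qed
  qed
  then have "cnorm_top closure_of D \<subseteq> cnorm_top closure_of M_dom"
    by (metis closure_of_closure_of closure_of_mono)
  then show ?thesis
    using dense_D by blast
qed

abbreviation "M_adj_out \<equiv> outer_mult \<mu> D (\<lambda>x. cnj (m x)) \<theta> \<omega>"
abbreviation "M_adj_dom \<equiv> dmult_dom \<mu> D (\<lambda>x. cnj (m x)) \<theta> \<omega>"
abbreviation "M_adj \<equiv> dmult \<mu> D (\<lambda>x. cnj (m x)) \<theta> \<omega>"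

lemma M_adj_formal_adjoint:
  assumes g: "g \<in> M_adj_dom"
  shows "\<forall>f\<in>M_dom. cinner (M f) g = cinner f (M_adj g)"
proof
  fix f assume f: "f \<in> M_dom"
  have "cinner (M f) g = M_out f g"
    using outer_mult_dmult[OF dense_D f] dmult_dom_D[OF g] by simp
  also have "\<dots> = cnj (M_adj_out g f)"
    using outer_mult_cnj_swap[where \<mu> = \<mu> and m = m and \<omega> = \<omega> and \<theta> = \<theta>, OF dmult_dom_D[OF f] dmult_dom_D[OF g]] by simp
  also have "\<dots> = cinner f (M_adj g)"
    using outer_mult_dmult[OF dense_D g] dmult_dom_D[OF f] cinner_commute[of f] by simp
  finally show "cinner (M f) g = cinner f (M_adj g)" .
qed

end

locale reflexive_invertible_outer_multiplier = invertible_outer_multiplier +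
  assumes reflexive: "reflexive_space (+) cscale 0 t"
begin

lemma outer_inv_functional_in_bidual:
  "(\<lambda>F. if F \<in> Dcross t then cinner h (M_out_inv F) else 0) \<in> conj_dual fadd fscal fzero (Dcross_top t)"
  (is "?\<Psi> \<in> _")
proof (rule conj_dualI, unfold topspace_strong_top, goal_cases)
  case 1
  show ?case
  proof (intro ballI)
    fix F1 F2 assume F: "F1 \<in> Dcross t" "F2 \<in> Dcross t"
    then show "?\<Psi> (fadd F1 F2) = ?\<Psi> F1 + ?\<Psi> F2"
      by (simp add: fadd_in_Dcross outer_inv_add cinner_add_right)
  qed
next
  case 2
  show ?case
  proof (intro allI ballI)
    fix c F assume "F \<in> Dcross t"
    then show "?\<Psi> (fscal c F) = cnj c * ?\<Psi> F"
      by (simp add: fscal_in_Dcross outer_inv_scal cinner_scale_right)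
  qed
next
  case 3
  have "continuous_map (Dcross_top t) euclidean (cinner h \<circ> ((\<lambda>x. x) \<circ> M_out_inv))"
    by (rule continuous_map_compose[OF continuous_map_compose[OF inv_cont
          continuous_map_rigged_inclusion[OF rigged]] continuous_map_cinner_right])
  then show ?case
    by (rule continuous_map_eq) simp
qed simp

lemma outer_inv_functional_represented:
  obtains g where "g \<in> D" "\<And>F. F \<in> Dcross t \<Longrightarrow> cnj (F g) = cinner h (M_out_inv F)"
proof -
  have "bij_betw (\<lambda>f F. if F \<in> Dcross t then cnj (F f) else 0) D (conj_dual fadd fscal fzero (Dcross_top t))"
    using reflexive topspace_t unfolding reflexive_space_def Let_def by simp
  then obtain g where "g \<in> D"
    "(\<lambda>F. if F \<in> Dcross t then cnj (F g) else 0) = (\<lambda>F. if F \<in> Dcross t then cinner h (M_out_inv F) else 0)"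
    using outer_inv_functional_in_bidual unfolding bij_betw_def by (metis (no_types, lifting) imageE)
  then show ?thesis
    using that by (metis (mono_tags, lifting))
qed

lemma adj_dom_subset: "adj_dom M_dom M \<subseteq> M_adj_dom"
proof
  fix g assume "g \<in> adj_dom M_dom M"
  then obtain h where h: "\<forall>f\<in>M_dom. cinner (M f) g = cinner f h"
    unfolding adj_dom_def by blast
  obtain g' where g': "g' \<in> D" "\<And>F. F \<in> Dcross t \<Longrightarrow> cnj (F g') = cinner h (M_out_inv F)"
    using outer_inv_functional_represented[of h] by blast
  have "cinner k g' = cinner k g" for k
  proof -
    have "cnj (cinner k g') = cnj (hemb D k g')"
      using g'(1) by (simp add: hemb_def)
    also have "\<dots> = cinner h (M_inv k)"
      unfolding M_inv_def by (rule g'(2)[OF hemb_in_Dcross])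
    also have "\<dots> = cnj (cinner (M (M_inv k)) g)"
      using h M_inv_in_dom cinner_commute by metis
    finally show ?thesis by (simp add: M_M_inv)
  qed
  then have "g = g'"
    by (metis cinner_diff_right cinner_eq_zero diff_self eq_iff_diff_eq_0)
  show "g \<in> M_adj_dom"
    unfolding dmult_dom_def
  proof (intro CollectI conjI exI ballI)
    show "g \<in> D" using g'(1) \<open>g = g'\<close> by simp
    fix f assume f: "f \<in> D"
    have "M_adj_out g f = cnj (M_out f g')"
      using outer_mult_cnj_swap[where \<mu> = \<mu> and m = m and \<omega> = \<omega> and \<theta> = \<theta>, OF f \<open>g \<in> D\<close>] \<open>g = g'\<close> by simp
    also have "\<dots> = cinner h f"
      using g'(2)[OF outer_mult_in_Dcross[OF f]] outer_inv_mult[OF f] by simp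
    finally show "M_adj_out g f = cinner h f" .
  qed
qed

lemma adj_dom_M: "adj_dom M_dom M = M_adj_dom"
  using adj_dom_subset M_adj_formal_adjoint unfolding adj_dom_def by blast

lemma adj_M: "g \<in> M_adj_dom \<Longrightarrow> adj M_dom M g = M_adj g"
  using adj_eqI[OF dense_M_dom M_adj_formal_adjoint] .

end

theorem proposition4p1:
  fixes D :: "'h::chilbert set" and t :: "'h topology"
    and \<mu> :: "'x measure" and m :: "'x \<Rightarrow> complex"
    and \<omega> \<theta> :: "'x \<Rightarrow> 'h \<Rightarrow> complex"
  assumes rhs: "rigged_hilbert D t"
    and fre: "frechet (+) cscale 0 t"
    and refl: "reflexive_space (+) cscale 0 t"
    and sf: "sigma_finite_measure \<mu>"
    and bom: "bessel_map \<mu> t \<omega>"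
    and bth: "bessel_map \<mu> t \<theta>"
    and m_meas: "m \<in> borel_measurable \<mu>"
    and m_bdd: "\<exists>C. AE x in \<mu>. cmod (m x) \<le> C"
    and bij: "bij_betw (outer_mult \<mu> D m \<omega> \<theta>) D (Dcross t)"
    and inv_cont: "continuous_map (Dcross_top t) t (the_inv_into D (outer_mult \<mu> D m \<omega> \<theta>))"
  shows "bij_betw (dmult \<mu> D m \<omega> \<theta>) (dmult_dom \<mu> D m \<omega> \<theta>) UNIV
      \<and> cnorm_top closure_of (dmult_dom \<mu> D m \<omega> \<theta>) = UNIV
      \<and> (\<exists>C. \<forall>h. cnorm (the_inv_into (dmult_dom \<mu> D m \<omega> \<theta>) (dmult \<mu> D m \<omega> \<theta>) h) \<le> C * cnorm h)
      \<and> closed_op (dmult_dom \<mu> D m \<omega> \<theta>) (dmult \<mu> D m \<omega> \<theta>)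
      \<and> adj_dom (dmult_dom \<mu> D m \<omega> \<theta>) (dmult \<mu> D m \<omega> \<theta>) = dmult_dom \<mu> D (\<lambda>x. cnj (m x)) \<theta> \<omega>
      \<and> (\<forall>g\<in>dmult_dom \<mu> D (\<lambda>x. cnj (m x)) \<theta> \<omega>.
           adj (dmult_dom \<mu> D m \<omega> \<theta>) (dmult \<mu> D m \<omega> \<theta>) g = dmult \<mu> D (\<lambda>x. cnj (m x)) \<theta> \<omega> g)"
proof -
  interpret reflexive_invertible_outer_multiplier D t \<mu> m \<omega> \<theta>
    using rhs bom bth m_meas m_bdd bij inv_cont refl
    by unfold_locales
  show ?thesis
    using bij_M dense_M_dom M_inv_bounded closed_M adj_dom_M adj_M by (simp add: the_inv_M)
qed

end
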